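(* Let $n\ge2$, $p\ge1$, $B\ge1$, $k\in\{1,\dots,p\}$, and consider $\hat S^{\mathrm{CPSS}}_{n,\tau}$ and $p_{k,\lfloor n/2\rfloor}$ as described in the context. (i) If $\tau\in(\frac12,1]$, then $\mathbb{P}(k\in\hat S^{\mathrm{CPSS}}_{n,\tau})\le\frac{1}{2\tau-1}p_{k,\lfloor n/2\rfloor}^2$. (ii) If $\tau\in[0,\frac12)$, then $\mathbb{P}(k\notin\hat S^{\mathrm{CPSS}}_{n,\tau})\le\frac{1}{1-2\tau}(1-p_{k,\lfloor n/2\rfloor})^2$.
   Context: Let $Z_1,\dots,Z_n$ be i.i.d. random elements. A variable selection procedure is a family of statistics $\hat S_m=\hat S_m(Z_1,\dots,Z_m)$, $m\ge1$, taking values in the subsets of $\{1,\dots,p\}$. For $A=\{i_1<\dots<i_{|A|}\}\subseteq\{1,\dots,n\}$ write $\hat S(A):=\hat S_{|A|}(Z_{i_1},\dots,Z_{i_{|A|}})$, and let $p_{k,m}:=\mathbb{P}(k\in\hat S_m(Z_1,\dots,Z_m))$. Let $\{(A_{2j-1},A_{2j}):j=1,\dots,B\}$ be randomly chosen pairs of subsets of $\{1,\dots,n\}$ of size $\lfloor n/2\rfloor$ with $A_{2j-1}\cap A_{2j}=\emptyset$, the pairs independent of each other and of the data. Define $\hat\Pi_B(k):=\frac1{2B}\sum_{j=1}^{2B}\mathbb{1}_{\{k\in\hat S(A_j)\}}$ and $\hat S^{\mathrm{CPSS}}_{n,\tau}:=\{k:\hat\Pi_B(k)\ge\tau\}$.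 *)

theory Defs
  imports "HOL-Probability.Probability"
begin

abbreviation sample_space :: "'z measure \<Rightarrow> nat \<Rightarrow> (nat \<Rightarrow> 'z) measure" where
  "sample_space D m \<equiv> PiM {1..m} (\<lambda>_. D)"

definition subsample :: "(nat \<Rightarrow> 'z) \<Rightarrow> nat set \<Rightarrow> (nat \<Rightarrow> 'z)" where
  "subsample z A = (\<lambda>i\<in>{1..card A}. z (sorted_list_of_set A ! (i - 1)))"

definition S_hat :: "(nat \<Rightarrow> (nat \<Rightarrow> 'z) \<Rightarrow> nat set) \<Rightarrow> (nat \<Rightarrow> 'z) \<Rightarrow> nat set \<Rightarrow> nat set" where
  "S_hat S z A = S (card A) (subsample z A)"

definition sel_prob :: "'z measure \<Rightarrow> (nat \<Rightarrow> (nat \<Rightarrow> 'z) \<Rightarrow> nat set) \<Rightarrow> nat \<Rightarrow> nat \<Rightarrow> real" where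
  "sel_prob D S k m = measure (sample_space D m) {x \<in> space (sample_space D m). k \<in> S m x}"

text \<open>Pi_hat_B(k) = 1/(2B) sum_{j=1}^{2B} 1{k \<in> S_hat(A_j)}, where pair j is
  a j = (A_{2j-1}, A_{2j}).\<close>
definition Pi_hat :: "(nat \<Rightarrow> (nat \<Rightarrow> 'z) \<Rightarrow> nat set) \<Rightarrow> nat \<Rightarrow> (nat \<Rightarrow> 'z) \<Rightarrow> (nat \<Rightarrow> nat set \<times> nat set) \<Rightarrow> nat \<Rightarrow> real" where
  "Pi_hat S B z a k = (\<Sum>j\<in>{1..B}. of_bool (k \<in> S_hat S z (fst (a j))) + of_bool (k \<in> S_hat S z (snd (a j)))) / (2 * real B)"

definition CPSS :: "(nat \<Rightarrow> (nat \<Rightarrow> 'z) \<Rightarrow> nat set) \<Rightarrow> nat \<Rightarrow> real \<Rightarrow> (nat \<Rightarrow> 'z) \<Rightarrow> (nat \<Rightarrow> nat set \<times> nat set) \<Rightarrow> nat set" where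
  "CPSS S B \<tau> z a = {k. Pi_hat S B z a k \<ge> \<tau>}"

abbreviation pairs_law :: "nat \<Rightarrow> (nat \<Rightarrow> (nat set \<times> nat set) pmf) \<Rightarrow> (nat \<Rightarrow> nat set \<times> nat set) pmf" where
  "pairs_law B Q \<equiv> Pi_pmf {1..B} ({}, {}) Q"

text \<open>Probability of an event about the CPSS output, over data and independent
  random pairs (Fubini: average over the pairs of the data probability).\<close>
definition CPSS_prob :: "'z measure \<Rightarrow> nat \<Rightarrow> nat \<Rightarrow> (nat \<Rightarrow> (nat set \<times> nat set) pmf) \<Rightarrow>
    (nat \<Rightarrow> (nat \<Rightarrow> 'z) \<Rightarrow> nat set) \<Rightarrow> real \<Rightarrow> (nat set \<Rightarrow> bool) \<Rightarrow> real" where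
  "CPSS_prob D n B Q S \<tau> E =
     measure_pmf.expectation (pairs_law B Q)
       (\<lambda>a. measure (sample_space D n) {z \<in> space (sample_space D n). E (CPSS S B \<tau> z a)})"

definition valid_pair :: "nat \<Rightarrow> nat set \<times> nat set \<Rightarrow> bool" where
  "valid_pair n P \<longleftrightarrow> fst P \<subseteq> {1..n} \<and> snd P \<subseteq> {1..n} \<and>
     card (fst P) = n div 2 \<and> card (snd P) = n div 2 \<and> fst P \<inter> snd P = {}"

end

theory Submission imports Defs begin

text \<open>
  Fix the random pairs. The two halves of a pair are disjoint subsamples of the i.i.d. data, hence
  independent samples of size \<open>\<lfloor>n/2\<rfloor>\<close>: both select \<open>k\<close> with probability \<open>p\<^sup>2\<close>, neither with
  probability \<open>(1 - p)\<^sup>2\<close>. Since each pair contributes at most \<open>1 + \<one>[both select k]\<close> to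
  \<open>2B \<Pi>\<^sub>B(k)\<close>, the event \<open>\<Pi>\<^sub>B(k) \<ge> \<tau>\<close> forces at least \<open>B(2\<tau> - 1)\<close> pairs to select \<open>k\<close> twice, and
  Markov's inequality for the number of such pairs gives (i); (ii) is symmetric, counting pairs
  where neither half selects \<open>k\<close>. Averaging over the law of the pairs preserves both bounds.
\<close>

lemma subsample_index_bij:
  assumes "finite A"
  shows "bij_betw (\<lambda>i. sorted_list_of_set A ! (i - 1)) {1..card A} A"
proof -
  have "bij_betw (\<lambda>i. i - 1) {1..card A} {..<card A}"
    by (rule bij_betwI[where g = Suc]) auto
  moreover have "bij_betw ((!) (sorted_list_of_set A)) {..<card A} A"
    using assms by (intro bij_betw_nth) auto
  ultimately have "bij_betw ((!) (sorted_list_of_set A) \<circ> (\<lambda>i. i - 1)) {1..card A} A"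
    by (rule bij_betw_trans)
  then show ?thesis
    by (simp add: comp_def)
qed

lemma subsample_index_mem:
  "finite A \<Longrightarrow> i \<in> {1..card A} \<Longrightarrow> sorted_list_of_set A ! (i - 1) \<in> A"
  using bij_betw_apply[OF subsample_index_bij] by blast

lemma subsample_restrict: "finite A \<Longrightarrow> subsample (restrict z A) A = subsample z A"
  unfolding subsample_def by (intro restrict_ext) (metis restrict_apply' subsample_index_mem)

lemma measurable_subsample:
  assumes "finite A" "A \<subseteq> I"
  shows "(\<lambda>z. subsample z A) \<in> PiM I (\<lambda>_. D) \<rightarrow>\<^sub>M sample_space D (card A)"
  unfolding subsample_def
  using assms subsample_index_mem by (intro measurable_restrict measurable_component_singleton) auto

lemma distr_subsample:
  assumes "prob_space D" "A \<subseteq> {1..n}"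
  shows "distr (sample_space D n) (sample_space D (card A)) (\<lambda>z. subsample z A) = sample_space D (card A)"
proof -
  have "finite A" using assms(2) finite_subset by blast
  then have "distr (sample_space D n) (\<Pi>\<^sub>M i\<in>{1..card A}. D)
      (\<lambda>z. \<lambda>i\<in>{1..card A}. z (sorted_list_of_set A ! (i - 1))) = (\<Pi>\<^sub>M i\<in>{1..card A}. D)"
    using assms subsample_index_bij[of A] subsample_index_mem[of A]
    by (intro distr_PiM_reindex[where M = "\<lambda>_. D", simplified]) (auto simp: bij_betw_def)
  then show ?thesis by (simp add: subsample_def[abs_def])
qed

lemma prob_subsample:
  assumes "prob_space D" "A \<subseteq> {1..n}" "E \<in> sets (sample_space D (card A))"
  shows "measure (sample_space D n) {z \<in> space (sample_space D n). subsample z A \<in> E}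
       = measure (sample_space D (card A)) E"
proof -
  have meas: "(\<lambda>z. subsample z A) \<in> sample_space D n \<rightarrow>\<^sub>M sample_space D (card A)"
    using assms(2) finite_subset by (intro measurable_subsample) auto
  have "measure (sample_space D (card A)) E
      = measure (distr (sample_space D n) (sample_space D (card A)) (\<lambda>z. subsample z A)) E"
    unfolding distr_subsample[OF assms(1,2)] ..
  also have "\<dots> = measure (sample_space D n) ((\<lambda>z. subsample z A) -` E \<inter> space (sample_space D n))"
    by (rule measure_distr[OF meas assms(3)])
  finally show ?thesis
    by (simp add: Int_def conj_commute)
qed

lemma subsample_in_space:
  "A \<subseteq> {1..n} \<Longrightarrow> z \<in> space (sample_space D n) \<Longrightarrow> subsample z A \<in> space (sample_space D (card A))"
  using measurable_space[OF measurable_subsample] finite_subset by blast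

lemma indep_vars_PiM_coordinates:
  assumes "I \<noteq> {}" "\<And>i. i \<in> I \<Longrightarrow> prob_space (M i)"
  shows "prob_space.indep_vars (PiM I M) M (\<lambda>i x. x i) I"
proof -
  interpret prob_space "PiM I M"
    using assms(2) by (rule prob_space_PiM)
  have "distr (PiM I M) (PiM I M) (\<lambda>x. \<lambda>i\<in>I. x i) = distr (PiM I M) (PiM I M) (\<lambda>x. x)"
    by (rule distr_cong) (auto simp: space_PiM)
  also have "\<dots> = (\<Pi>\<^sub>M i\<in>I. distr (PiM I M) (M i) (\<lambda>x. x i))"
    by (auto intro!: PiM_cong simp: distr_PiM_component assms(2))
  finally show ?thesis
    using assms(1) by (subst indep_vars_iff_distr_eq_PiM') auto
qed

lemma indep_var_subsamples:
  assumes "prob_space D" "n \<ge> 1" "A1 \<subseteq> {1..n}" "A2 \<subseteq> {1..n}" "A1 \<inter> A2 = {}"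
  shows "prob_space.indep_var (sample_space D n)
           (sample_space D (card A1)) (\<lambda>z. subsample z A1)
           (sample_space D (card A2)) (\<lambda>z. subsample z A2)"
proof -
  interpret prob_space "sample_space D n"
    using assms(1) by (intro prob_space_PiM)
  have fin: "finite A1" "finite A2"
    using assms(3,4) finite_subset by auto
  have "indep_var (PiM A1 (\<lambda>_. D)) (\<lambda>z. restrict z A1) (PiM A2 (\<lambda>_. D)) (\<lambda>z. restrict z A2)"
    using indep_var_restrict[OF indep_vars_PiM_coordinates assms(5,3,4)] assms(1,2) by simp
  then have "indep_var (sample_space D (card A1)) ((\<lambda>y. subsample y A1) \<circ> (\<lambda>z. restrict z A1))
                       (sample_space D (card A2)) ((\<lambda>y. subsample y A2) \<circ> (\<lambda>z. restrict z A2))"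
    by (rule indep_var_compose) (use measurable_subsample fin in auto)
  then show ?thesis
    by (simp add: comp_def subsample_restrict fin)
qed

lemma prob_disjoint_subsamples:
  assumes "prob_space D" "n \<ge> 1" "A1 \<subseteq> {1..n}" "A2 \<subseteq> {1..n}" "A1 \<inter> A2 = {}"
    and "E1 \<in> sets (sample_space D (card A1))" "E2 \<in> sets (sample_space D (card A2))"
  shows "measure (sample_space D n) {z \<in> space (sample_space D n). subsample z A1 \<in> E1 \<and> subsample z A2 \<in> E2}
       = measure (sample_space D (card A1)) E1 * measure (sample_space D (card A2)) E2"
proof -
  interpret prob_space "sample_space D n"
    using assms(1) by (intro prob_space_PiM)
  have "prob ((\<lambda>z. (subsample z A1, subsample z A2)) -` (E1 \<times> E2) \<inter> space (sample_space D n))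
      = prob ((\<lambda>z. subsample z A1) -` E1 \<inter> space (sample_space D n))
      * prob ((\<lambda>z. subsample z A2) -` E2 \<inter> space (sample_space D n))"
    by (rule indep_varD[OF indep_var_subsamples[OF assms(1-5)] assms(6,7)])
  then show ?thesis
    using prob_subsample[OF assms(1,3,6)] prob_subsample[OF assms(1,4,7)]
    by (simp add: vimage_def Int_def conj_commute)
qed

lemma sets_S_hat_mem:
  assumes "A \<subseteq> {1..n}"
    and meas: "\<And>m i. {x \<in> space (sample_space D m). i \<in> S m x} \<in> sets (sample_space D m)"
  shows "{z \<in> space (sample_space D n). k \<in> S_hat S z A} \<in> sets (sample_space D n)"
proof -
  have "{z \<in> space (sample_space D n). k \<in> S_hat S z A}
      = (\<lambda>z. subsample z A) -` {x \<in> space (sample_space D (card A)). k \<in> S (card A) x} \<inter> space (sample_space D n)"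
    using subsample_in_space[OF assms(1)] by (auto simp: S_hat_def)
  also have "\<dots> \<in> sets (sample_space D n)"
    using assms(1) finite_subset by (intro measurable_sets[OF measurable_subsample meas]) auto
  finally show ?thesis .
qed

lemma valid_pair_components:
  assumes "valid_pair n P"
  shows "fst P \<subseteq> {1..n}" "snd P \<subseteq> {1..n}" "fst P \<inter> snd P = {}"
    and "card (fst P) = n div 2" "card (snd P) = n div 2"
  using assms by (simp_all add: valid_pair_def)

lemma borel_measurable_Pi_hat:
  assumes "\<And>j. j \<in> {1..B} \<Longrightarrow> valid_pair n (a j)"
    and meas: "\<And>m i. {x \<in> space (sample_space D m). i \<in> S m x} \<in> sets (sample_space D m)"
  shows "(\<lambda>z. Pi_hat S B z a k) \<in> borel_measurable (sample_space D n)"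
proof -
  have "Measurable.pred (sample_space D n) (\<lambda>z. k \<in> S_hat S z (fst (a j)))"
       "Measurable.pred (sample_space D n) (\<lambda>z. k \<in> S_hat S z (snd (a j)))" if "j \<in> {1..B}" for j
    using sets_S_hat_mem[OF valid_pair_components(1)[OF assms(1)[OF that]] meas]
      sets_S_hat_mem[OF valid_pair_components(2)[OF assms(1)[OF that]] meas]
    unfolding pred_def .
  then show ?thesis
    unfolding Pi_hat_def by measurable
qed

lemma sel_prob_compl:
  assumes "prob_space D"
    and meas: "\<And>m i. {x \<in> space (sample_space D m). i \<in> S m x} \<in> sets (sample_space D m)"
  shows "measure (sample_space D m) {x \<in> space (sample_space D m). k \<notin> S m x} = 1 - sel_prob D S k m"
proof -
  interpret prob_space "sample_space D m"
    using assms(1) by (intro prob_space_PiM)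
  have "{x \<in> space (sample_space D m). k \<notin> S m x}
      = space (sample_space D m) - {x \<in> space (sample_space D m). k \<in> S m x}"
    by auto
  then show ?thesis
    using prob_compl[OF meas] by (simp add: sel_prob_def)
qed

lemma prob_pair_both_selected:
  assumes "prob_space D" "n \<ge> 1" "valid_pair n P"
    and meas: "\<And>m i. {x \<in> space (sample_space D m). i \<in> S m x} \<in> sets (sample_space D m)"
  shows "measure (sample_space D n)
           {z \<in> space (sample_space D n). k \<in> S_hat S z (fst P) \<and> k \<in> S_hat S z (snd P)}
       = (sel_prob D S k (n div 2))\<^sup>2"
proof -
  note P = valid_pair_components[OF assms(3)]
  let ?E = "{x \<in> space (sample_space D (n div 2)). k \<in> S (n div 2) x}"
  have "{z \<in> space (sample_space D n). k \<in> S_hat S z (fst P) \<and> k \<in> S_hat S z (snd P)}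
      = {z \<in> space (sample_space D n). subsample z (fst P) \<in> ?E \<and> subsample z (snd P) \<in> ?E}"
    using subsample_in_space[OF P(1)] subsample_in_space[OF P(2)] P(4,5) by (auto simp: S_hat_def)
  then show ?thesis
    using prob_disjoint_subsamples[OF assms(1,2) P(1-3), of ?E ?E] P(4,5) meas
    by (simp add: sel_prob_def power2_eq_square)
qed

lemma prob_pair_none_selected:
  assumes "prob_space D" "n \<ge> 1" "valid_pair n P"
    and meas: "\<And>m i. {x \<in> space (sample_space D m). i \<in> S m x} \<in> sets (sample_space D m)"
  shows "measure (sample_space D n)
           {z \<in> space (sample_space D n). k \<notin> S_hat S z (fst P) \<and> k \<notin> S_hat S z (snd P)}
       = (1 - sel_prob D S k (n div 2))\<^sup>2"
proof -
  note P = valid_pair_components[OF assms(3)]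
  let ?E = "{x \<in> space (sample_space D (n div 2)). k \<notin> S (n div 2) x}"
  have "?E = space (sample_space D (n div 2)) - {x \<in> space (sample_space D (n div 2)). k \<in> S (n div 2) x}"
    by auto
  also have "\<dots> \<in> sets (sample_space D (n div 2))"
    by (rule sets.Diff[OF sets.top meas])
  finally have E: "?E \<in> sets (sample_space D (n div 2))" .
  have "{z \<in> space (sample_space D n). k \<notin> S_hat S z (fst P) \<and> k \<notin> S_hat S z (snd P)}
      = {z \<in> space (sample_space D n). subsample z (fst P) \<in> ?E \<and> subsample z (snd P) \<in> ?E}"
    using subsample_in_space[OF P(1)] subsample_in_space[OF P(2)] P(4,5) by (auto simp: S_hat_def)
  then show ?thesis
    using prob_disjoint_subsamples[OF assms(1,2) P(1-3), of ?E ?E] P(4,5) E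
      sel_prob_compl[OF assms(1) meas]
    by (simp add: power2_eq_square)
qed

lemma (in prob_space) prob_le_of_multiple_cover:
  fixes c :: real
  assumes "finite J" "\<And>j. j \<in> J \<Longrightarrow> E j \<in> events" "G \<in> events" "0 < c"
    and cover: "\<And>x. x \<in> G \<Longrightarrow> c \<le> card {j \<in> J. x \<in> E j}"
  shows "prob G \<le> (\<Sum>j\<in>J. prob (E j)) / c"
proof -
  let ?N = "\<lambda>x. \<Sum>j\<in>J. indicator (E j) x :: real"
  have N: "?N x = card {j \<in> J. x \<in> E j}" for x
    using assms(1) by (simp add: indicator_def Int_def conj_commute)
  have int: "integrable M ?N"
    using assms(2) by (intro Bochner_Integration.integrable_sum integrable_real_indicator)
      (auto simp: less_top[symmetric])
  have "{x \<in> space M. c \<le> ?N x} \<in> events"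
    using borel_measurable_integrable[OF int] by measurable
  then have "prob G \<le> prob {x \<in> space M. c \<le> ?N x}"
    using assms(3) sets.sets_into_space cover by (intro finite_measure_mono) (auto simp: N)
  also have "\<dots> \<le> expectation ?N / c"
    by (rule integral_Markov_inequality_measure[OF int assms(3)]) (auto simp: assms(4) sum_nonneg)
  also have "expectation ?N = (\<Sum>j\<in>J. prob (E j))"
    using assms(2) by (simp add: integrable_real_indicator less_top[symmetric])
  finally show ?thesis .
qed

lemma card_both_selected_ge:
  assumes "B \<ge> 1" "\<tau> \<le> Pi_hat S B z a k"
  shows "real B * (2 * \<tau> - 1)
       \<le> card {j \<in> {1..B}. k \<in> S_hat S z (fst (a j)) \<and> k \<in> S_hat S z (snd (a j))}"
proof -
  let ?u = "\<lambda>j. k \<in> S_hat S z (fst (a j))" and ?v = "\<lambda>j. k \<in> S_hat S z (snd (a j))"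
  have "2 * real B * \<tau> \<le> (\<Sum>j\<in>{1..B}. of_bool (?u j) + of_bool (?v j))"
    using assms by (simp add: Pi_hat_def field_simps)
  also have "\<dots> \<le> (\<Sum>j\<in>{1..B}. 1 + of_bool (?u j \<and> ?v j))"
    by (intro sum_mono) auto
  also have "\<dots> = real B + card {j \<in> {1..B}. ?u j \<and> ?v j}"
    by (simp add: sum.distrib Int_def conj_commute)
  finally show ?thesis
    by (simp add: algebra_simps)
qed

lemma card_none_selected_ge:
  assumes "B \<ge> 1" "Pi_hat S B z a k < \<tau>"
  shows "real B * (1 - 2 * \<tau>)
       \<le> card {j \<in> {1..B}. k \<notin> S_hat S z (fst (a j)) \<and> k \<notin> S_hat S z (snd (a j))}"
proof -
  let ?u = "\<lambda>j. k \<in> S_hat S z (fst (a j))" and ?v = "\<lambda>j. k \<in> S_hat S z (snd (a j))"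
  have "real B - card {j \<in> {1..B}. \<not> ?u j \<and> \<not> ?v j} = (\<Sum>j\<in>{1..B}. 1 - of_bool (\<not> ?u j \<and> \<not> ?v j))"
    by (simp add: sum_subtractf Int_def conj_commute)
  also have "\<dots> \<le> (\<Sum>j\<in>{1..B}. of_bool (?u j) + of_bool (?v j))"
    by (intro sum_mono) auto
  also have "\<dots> < 2 * real B * \<tau>"
    using assms by (simp add: Pi_hat_def field_simps)
  finally show ?thesis
    by (simp add: algebra_simps)
qed

lemma prob_CPSS_mem_le:
  assumes "prob_space D" "n \<ge> 1" "B \<ge> 1" "1/2 < \<tau>"
    and meas: "\<And>m i. {x \<in> space (sample_space D m). i \<in> S m x} \<in> sets (sample_space D m)"
    and valid: "\<And>j. j \<in> {1..B} \<Longrightarrow> valid_pair n (a j)"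
  shows "measure (sample_space D n) {z \<in> space (sample_space D n). k \<in> CPSS S B \<tau> z a}
       \<le> 1 / (2 * \<tau> - 1) * (sel_prob D S k (n div 2))\<^sup>2"
proof -
  interpret prob_space "sample_space D n"
    using assms(1) by (intro prob_space_PiM)
  let ?p = "sel_prob D S k (n div 2)"
  let ?G = "{z \<in> space (sample_space D n). k \<in> CPSS S B \<tau> z a}"
  let ?both = "\<lambda>j. {z \<in> space (sample_space D n). k \<in> S_hat S z (fst (a j)) \<and> k \<in> S_hat S z (snd (a j))}"
  have G: "?G \<in> events"
    unfolding CPSS_def mem_Collect_eq using borel_measurable_Pi_hat[OF valid meas] by measurable
  have both: "?both j \<in> events" if "j \<in> {1..B}" for j
  proof -
    note P = valid_pair_components[OF valid[OF that]]
    have "?both j = {z \<in> space (sample_space D n). k \<in> S_hat S z (fst (a j))}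
                 \<inter> {z \<in> space (sample_space D n). k \<in> S_hat S z (snd (a j))}"
      by auto
    then show ?thesis
      using sets_S_hat_mem[OF P(1) meas] sets_S_hat_mem[OF P(2) meas] by simp
  qed
  have cover: "real B * (2 * \<tau> - 1) \<le> card {j \<in> {1..B}. z \<in> ?both j}" if "z \<in> ?G" for z
  proof -
    from that have "z \<in> space (sample_space D n)" "\<tau> \<le> Pi_hat S B z a k"
      by (auto simp: CPSS_def)
    then show ?thesis
      using card_both_selected_ge[OF assms(3)] by simp
  qed
  have "prob ?G \<le> (\<Sum>j\<in>{1..B}. prob (?both j)) / (real B * (2 * \<tau> - 1))"
    using assms(3,4) by (intro prob_le_of_multiple_cover both G cover) auto
  also have "\<dots> = real B * ?p\<^sup>2 / (real B * (2 * \<tau> - 1))"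
    using prob_pair_both_selected[OF assms(1,2) valid meas] by simp
  also have "\<dots> = 1 / (2 * \<tau> - 1) * ?p\<^sup>2"
    using assms(3) by simp
  finally show ?thesis .
qed

lemma prob_CPSS_not_mem_le:
  assumes "prob_space D" "n \<ge> 1" "B \<ge> 1" "\<tau> < 1/2"
    and meas: "\<And>m i. {x \<in> space (sample_space D m). i \<in> S m x} \<in> sets (sample_space D m)"
    and valid: "\<And>j. j \<in> {1..B} \<Longrightarrow> valid_pair n (a j)"
  shows "measure (sample_space D n) {z \<in> space (sample_space D n). k \<notin> CPSS S B \<tau> z a}
       \<le> 1 / (1 - 2 * \<tau>) * (1 - sel_prob D S k (n div 2))\<^sup>2"
proof -
  interpret prob_space "sample_space D n"
    using assms(1) by (intro prob_space_PiM)
  let ?p = "sel_prob D S k (n div 2)"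
  let ?G = "{z \<in> space (sample_space D n). k \<notin> CPSS S B \<tau> z a}"
  let ?none = "\<lambda>j. {z \<in> space (sample_space D n). k \<notin> S_hat S z (fst (a j)) \<and> k \<notin> S_hat S z (snd (a j))}"
  have G: "?G \<in> events"
    unfolding CPSS_def mem_Collect_eq using borel_measurable_Pi_hat[OF valid meas] by measurable
  have none: "?none j \<in> events" if "j \<in> {1..B}" for j
  proof -
    note P = valid_pair_components[OF valid[OF that]]
    have "?none j = space (sample_space D n)
                    - ({z \<in> space (sample_space D n). k \<in> S_hat S z (fst (a j))}
                       \<union> {z \<in> space (sample_space D n). k \<in> S_hat S z (snd (a j))})"
      by auto
    then show ?thesis
      using sets_S_hat_mem[OF P(1) meas] sets_S_hat_mem[OF P(2) meas] by simp
  qed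
  have cover: "real B * (1 - 2 * \<tau>) \<le> card {j \<in> {1..B}. z \<in> ?none j}" if "z \<in> ?G" for z
  proof -
    from that have "z \<in> space (sample_space D n)" "Pi_hat S B z a k < \<tau>"
      by (auto simp: CPSS_def)
    then show ?thesis
      using card_none_selected_ge[OF assms(3)] by simp
  qed
  have "prob ?G \<le> (\<Sum>j\<in>{1..B}. prob (?none j)) / (real B * (1 - 2 * \<tau>))"
    using assms(3,4) by (intro prob_le_of_multiple_cover none G cover) auto
  also have "\<dots> = real B * (1 - ?p)\<^sup>2 / (real B * (1 - 2 * \<tau>))"
    using prob_pair_none_selected[OF assms(1,2) valid meas] by simp
  also have "\<dots> = 1 / (1 - 2 * \<tau>) * (1 - ?p)\<^sup>2"
    using assms(3) by simp
  finally show ?thesis .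
qed

lemma set_pmf_Pi_pmf_apply:
  "finite I \<Longrightarrow> a \<in> set_pmf (Pi_pmf I d Q) \<Longrightarrow> j \<in> I \<Longrightarrow> a j \<in> set_pmf (Q j)"
  by (auto simp: set_Pi_pmf PiE_dflt_def)

lemma CPSS_prob_le:
  assumes "prob_space D"
    and bound: "\<And>a. a \<in> set_pmf (pairs_law B Q) \<Longrightarrow>
      measure (sample_space D n) {z \<in> space (sample_space D n). E (CPSS S B \<tau> z a)} \<le> c"
  shows "CPSS_prob D n B Q S \<tau> E \<le> c"
proof -
  interpret prob_space "sample_space D n"
    using assms(1) by (intro prob_space_PiM)
  let ?f = "\<lambda>a. measure (sample_space D n) {z \<in> space (sample_space D n). E (CPSS S B \<tau> z a)}"
  have "norm (?f a) \<le> 1" for a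
    using prob_le_1 measure_nonneg by (metis abs_of_nonneg real_norm_def)
  then have "integrable (measure_pmf (pairs_law B Q)) ?f"
    by (intro measure_pmf.integrable_const_bound[where B = 1]) auto
  moreover have "AE a in pairs_law B Q. ?f a \<le> c"
    unfolding AE_measure_pmf_iff using bound by blast
  ultimately show ?thesis
    unfolding CPSS_prob_def by (rule measure_pmf.integral_le_const)
qed

theorem lemma1:
  fixes D :: "'z measure" and S :: "nat \<Rightarrow> (nat \<Rightarrow> 'z) \<Rightarrow> nat set"
    and Q :: "nat \<Rightarrow> (nat set \<times> nat set) pmf"
    and n p B k :: nat and \<tau> :: real
  assumes "prob_space D"
    and "n \<ge> 2" and "p \<ge> 1" and "B \<ge> 1" and "k \<in> {1..p}"
    and "\<And>m x. S m x \<subseteq> {1..p}"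
    and "\<And>m i. {x \<in> space (sample_space D m). i \<in> S m x} \<in> sets (sample_space D m)"
    and "\<And>j P. j \<in> {1..B} \<Longrightarrow> P \<in> set_pmf (Q j) \<Longrightarrow> valid_pair n P"
  shows "(1/2 < \<tau> \<and> \<tau> \<le> 1 \<longrightarrow>
           CPSS_prob D n B Q S \<tau> (\<lambda>T. k \<in> T)
             \<le> 1 / (2 * \<tau> - 1) * (sel_prob D S k (n div 2))\<^sup>2)
       \<and> (0 \<le> \<tau> \<and> \<tau> < 1/2 \<longrightarrow>
           CPSS_prob D n B Q S \<tau> (\<lambda>T. k \<notin> T)
             \<le> 1 / (1 - 2 * \<tau>) * (1 - sel_prob D S k (n div 2))\<^sup>2)"
proof -
  have n: "n \<ge> 1"
    using assms(2) by simp
  have valid: "valid_pair n (a j)" if "a \<in> set_pmf (pairs_law B Q)" "j \<in> {1..B}" for a j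
    using assms(8)[OF that(2) set_pmf_Pi_pmf_apply[OF _ that]] by simp
  show ?thesis
  proof (intro conjI impI)
    assume "1/2 < \<tau> \<and> \<tau> \<le> 1"
    then have "1/2 < \<tau>" by simp
    show "CPSS_prob D n B Q S \<tau> (\<lambda>T. k \<in> T) \<le> 1 / (2 * \<tau> - 1) * (sel_prob D S k (n div 2))\<^sup>2"
      by (intro CPSS_prob_le[OF assms(1)] prob_CPSS_mem_le[OF assms(1) n assms(4) \<open>1/2 < \<tau>\<close> assms(7)] valid)
  next
    assume "0 \<le> \<tau> \<and> \<tau> < 1/2"
    then have "\<tau> < 1/2" by simp
    show "CPSS_prob D n B Q S \<tau> (\<lambda>T. k \<notin> T) \<le> 1 / (1 - 2 * \<tau>) * (1 - sel_prob D S k (n div 2))\<^sup>2"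
      by (intro CPSS_prob_le[OF assms(1)] prob_CPSS_not_mem_le[OF assms(1) n assms(4) \<open>\<tau> < 1/2\<close> assms(7)] valid)
  qed
qed

end
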